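(* Let $q$ be a prime power and let $\mathbb{F}_q$ denote the field with $q$ elements. There exist $\epsilon > 0$ and a constant $c_q < q$ such that the following holds: for every $\delta > 0$, for all sufficiently large $n$, for every set $A \subset \mathbb{F}_q^n$ with $|A| > c_q^n$ and every tuple $\mathbf{a} = (a,b,c) \in (\mathbb{F}_q\setminus\{0\})^3$ with $a+b+c=0$, we have \[ |A_{\mathbf{a}}^{\epsilon}| \ge (1-\delta)|A|, \] where \[ A_{\mathbf{a}}^{\epsilon} = \{x \in A \,:\, \text{there exist at least } |A|^{\epsilon} \text{ pairs } (y,z) \in A^2 \text{ with } ax+by+cz=0\}. \] Equivalently: there exists $\epsilon>0$ such that for every $\delta>0$, every $(\epsilon,\delta)$-cap set $A\subset \mathbb{F}_q^n$ satisfies $|A| \le c_q^n$ for sufficiently large $n$.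
   Context: For $\epsilon,\delta>0$ and a tuple $(a,b,c)\in(\mathbb{F}_q\setminus\{0\})^3$ with $a+b+c=0$, a set $A\subset\mathbb{F}_q^n$ is called an $(\epsilon,\delta)$-cap set (for the tuple $(a,b,c)$) if there exists $A'\subset A$ with $|A'|>\delta|A|$ such that for every $x\in A'$ the number of pairs $(y,z)\in A^2$ with $ax+by+cz=0$ is less than $|A|^{\epsilon}$. *)

theory Defs
  imports Complex_Main "HOL-Library.FuncSet"
begin

text \<open>The vector space F_q^n, realised as functions on the index set {0..<n}
 (extensional: value undefined outside the index set).\<close>

definition Fqn :: "nat \<Rightarrow> (nat \<Rightarrow> 'a) set" where
  "Fqn n = PiE {..<n} (\<lambda>_. UNIV)"

definition num_solutions :: "nat \<Rightarrow> (nat \<Rightarrow> 'a::field) set \<Rightarrow> 'a \<Rightarrow> 'a \<Rightarrow> 'a \<Rightarrow> (nat \<Rightarrow> 'a) \<Rightarrow> nat" where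
  "num_solutions n A a b c x =
     card {(y, z). y \<in> A \<and> z \<in> A \<and> (\<forall>i<n. a * x i + b * y i + c * z i = 0)}"

definition A_eps :: "nat \<Rightarrow> (nat \<Rightarrow> 'a::field) set \<Rightarrow> 'a \<Rightarrow> 'a \<Rightarrow> 'a \<Rightarrow> real \<Rightarrow> (nat \<Rightarrow> 'a) set" where
  "A_eps n A a b c \<epsilon> = {x \<in> A. real (num_solutions n A a b c x) \<ge> real (card A) powr \<epsilon>}"

end

theory Submission
  imports Defs "HOL-Library.Function_Algebras"
begin

text \<open>Following Ellenberg and Gijswijt, a set \<open>I \<subseteq> F_q^n\<close> on which \<open>a x + b y + c z = 0\<close> has
  only the trivial solutions is small. By dimension counting there is a polynomial \<open>P\<close> of degree
  at most \<open>d\<close> vanishing off \<open>(a + b) I\<close> whose support has at least \<open>m(d) - (q^n - |I|)\<close> points,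
  \<open>m(d)\<close> being the number of monomials of degree at most \<open>d\<close> with exponents below \<open>q\<close>. The
  matrix \<open>(P (a x + b y))\<close> over \<open>I \<times> I\<close> is diagonal with that many nonzero entries, while
  splitting each monomial of \<open>P (a x + b y)\<close> into a low-degree part in \<open>x\<close> or in \<open>y\<close> bounds its
  rank by \<open>2 m(d / 2)\<close>. With \<open>d\<close> about \<open>2 (q - 1) n / 3\<close> this gives \<open>|I| \<le> 3 m((q - 1) n / 3 + 1)\<close>,
  and a weighted count gives \<open>m((q - 1) n / 3 + 1) \<le> C \<Gamma>^n\<close> with \<open>\<Gamma> < q\<close>.

  The points of \<open>A\<close> lying in fewer than \<open>|A|^\<epsilon>\<close> solutions form a digraph (with an edge \<open>x \<rightarrow> y\<close>
  when some \<open>z \<in> A\<close> completes a solution) of out-degree below \<open>|A|^\<epsilon>\<close>. An independent set in it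
  has only trivial solutions, so there are at most \<open>(2 |A|^\<epsilon> + 1) C \<Gamma>^n\<close> such points, which is
  less than \<open>\<delta> |A|\<close> once \<open>|A| > c_q^n\<close> for suitable \<open>\<epsilon>\<close> and \<open>\<Gamma> < c_q < q\<close>.\<close>

section \<open>Independent sets in sparse digraphs\<close>

lemma sum_card_in_eq_sum_card_out:
  assumes "finite V"
  shows "(\<Sum>v\<in>V. card {u\<in>V. R u v}) = (\<Sum>u\<in>V. card {v\<in>V. R u v})"
proof -
  have "(\<Sum>v\<in>V. card {u\<in>V. R u v}) = card (SIGMA v:V. {u\<in>V. R u v})"
    using assms by (simp add: card_SigmaI)
  also have "\<dots> = card (SIGMA u:V. {v\<in>V. R u v})"
    by (rule bij_betw_same_card[of prod.swap]) (auto simp: bij_betw_def inj_on_def)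
  also have "\<dots> = (\<Sum>u\<in>V. card {v\<in>V. R u v})"
    using assms by (simp add: card_SigmaI)
  finally show ?thesis .
qed

lemma exists_low_indegree:
  assumes "finite V" "V \<noteq> {}" "\<forall>u\<in>V. card {v\<in>V. R u v} \<le> K"
  shows "\<exists>v\<in>V. card {u\<in>V. R u v} \<le> K"
proof (rule ccontr)
  assume "\<not> ?thesis"
  then have "(\<Sum>v\<in>V. Suc K) \<le> (\<Sum>v\<in>V. card {u\<in>V. R u v})"
    by (intro sum_mono) (auto simp: not_le)
  also have "\<dots> = (\<Sum>u\<in>V. card {v\<in>V. R u v})"
    using assms(1) by (rule sum_card_in_eq_sum_card_out)
  also have "\<dots> \<le> (\<Sum>u\<in>V. K)"
    using assms(3) by (intro sum_mono) auto
  finally show False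
    using assms(1,2) by simp
qed

lemma exists_small_closed_neighbourhood:
  assumes "finite V" "V \<noteq> {}" "\<forall>u\<in>V. card {v\<in>V. R u v} \<le> K"
  shows "\<exists>v\<in>V. card (insert v ({y\<in>V. R v y} \<union> {u\<in>V. R u v})) \<le> 2 * K + 1"
proof -
  obtain v where "v \<in> V" "card {u\<in>V. R u v} \<le> K"
    using exists_low_indegree[OF assms] by blast
  moreover have "card {y\<in>V. R v y} \<le> K"
    using assms(3) \<open>v \<in> V\<close> by blast
  moreover have "card (insert v ({y\<in>V. R v y} \<union> {u\<in>V. R u v}))
      \<le> Suc (card {y\<in>V. R v y} + card {u\<in>V. R u v})"
    using card_insert_le_m1[of _ "{y\<in>V. R v y} \<union> {u\<in>V. R u v}"] card_Un_le[of "{y\<in>V. R v y}"] assms(1)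
    by fastforce
  ultimately show ?thesis
    by (intro bexI[of _ v]) auto
qed

text \<open>Greedy choice: a vertex of small closed neighbourhood goes into the independent set, and its
  neighbourhood is discarded.\<close>
lemma exists_large_independent_subset:
  fixes K :: nat
  assumes "finite V" "\<forall>x\<in>V. card {y\<in>V. R x y} \<le> K"
  shows "\<exists>I\<subseteq>V. (\<forall>x\<in>I. \<forall>y\<in>I. R x y \<longrightarrow> x = y) \<and> card V \<le> (2 * K + 1) * card I"
  using assms
proof (induction "card V" arbitrary: V rule: less_induct)
  case less
  show ?case
  proof (cases "V = {}")
    case False
    then obtain v where "v \<in> V" and card_N: "card (insert v ({y\<in>V. R v y} \<union> {u\<in>V. R u v})) \<le> 2 * K + 1"
      using exists_small_closed_neighbourhood[OF less.prems(1) _ less.prems(2)] by blast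
    define N where "N = insert v ({y\<in>V. R v y} \<union> {u\<in>V. R u v})"
    define V' where "V' = V - N"
    have "N \<subseteq> V"
      using \<open>v \<in> V\<close> by (auto simp: N_def)
    then have card_V: "card V = card V' + card N"
      unfolding V'_def using less.prems(1)
      by (simp add: card_Diff_subset card_mono finite_subset)
    have "finite V'"
      using less.prems(1) by (simp add: V'_def)
    moreover have "card {y\<in>V'. R x y} \<le> K" if "x \<in> V'" for x
    proof -
      have "card {y\<in>V'. R x y} \<le> card {y\<in>V. R x y}"
        using less.prems(1) by (intro card_mono) (auto simp: V'_def)
      then show ?thesis
        using less.prems(2) that by (auto simp: V'_def)
    qed
    moreover have "card V' < card V"
      using card_V finite_subset[OF \<open>N \<subseteq> V\<close> less.prems(1)] by (simp add: N_def card_gt_0_iff)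
    ultimately obtain I where I: "I \<subseteq> V'" "\<forall>x\<in>I. \<forall>y\<in>I. R x y \<longrightarrow> x = y"
      "card V' \<le> (2 * K + 1) * card I"
      using less.hyps[of V'] by blast
    have "v \<notin> I" "finite I"
      using I(1) \<open>finite V'\<close> finite_subset by (auto simp: V'_def N_def)
    then have "card V \<le> (2 * K + 1) * card (insert v I)"
      using card_V card_N I(3) by (simp add: N_def)
    moreover have "\<forall>x\<in>insert v I. \<forall>y\<in>insert v I. R x y \<longrightarrow> x = y"
      using I(1,2) by (auto simp: V'_def N_def)
    ultimately show ?thesis
      using I(1) \<open>v \<in> V\<close> by (intro exI[of _ "insert v I"]) (auto simp: V'_def)
  qed simp
qed

section \<open>Counting monomials\<close>

definition exponents :: "nat \<Rightarrow> nat \<Rightarrow> (nat \<Rightarrow> nat) set" where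
  "exponents q n = PiE {..<n} (\<lambda>_. {..<q})"

definition total_degree :: "nat \<Rightarrow> (nat \<Rightarrow> nat) \<Rightarrow> nat" where
  "total_degree n e = (\<Sum>i<n. e i)"

definition num_monomials :: "nat \<Rightarrow> nat \<Rightarrow> nat \<Rightarrow> nat" where
  "num_monomials q n s = card {e\<in>exponents q n. total_degree n e \<le> s}"

lemma finite_exponents [simp]: "finite (exponents q n)"
  by (simp add: exponents_def finite_PiE)

lemma card_exponents: "card (exponents q n) = q ^ n"
  by (simp add: exponents_def card_PiE)

lemma num_monomials_mono: "s \<le> s' \<Longrightarrow> num_monomials q n s \<le> num_monomials q n s'"
  unfolding num_monomials_def by (intro card_mono) auto

text \<open>The reflection \<open>e \<mapsto> (q - 1) - e\<close> of exponent vectors turns degree \<open>D\<close> into \<open>(q - 1) n - D\<close>.\<close>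
lemma card_degree_gt_le_num_monomials:
  assumes "0 < q" "(q - 1) * n \<le> s + s' + 1"
  shows "card {e\<in>exponents q n. s < total_degree n e} \<le> num_monomials q n s'"
proof -
  define E where "E = exponents q n"
  define reflect where "reflect = (\<lambda>e. restrict (\<lambda>i. q - 1 - e i) {..<n})"
  have bounded: "\<forall>i<n. e i \<le> q - 1" if "e \<in> E" for e
    using that by (auto simp: E_def exponents_def PiE_def Pi_def)
  have reflect_E: "reflect e \<in> E" if "e \<in> E" for e
    using assms(1) by (simp add: reflect_def E_def exponents_def)
  have reflect_reflect: "reflect (reflect e) = e" if "e \<in> E" for e
    using that bounded[OF that]
    by (auto simp: reflect_def E_def exponents_def PiE_def extensional_def fun_eq_iff)
  have degree_reflect: "total_degree n (reflect e) + total_degree n e = (q - 1) * n" if "e \<in> E" for e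
  proof -
    have "(\<Sum>i<n. q - 1 - e i) + (\<Sum>i<n. e i) = (\<Sum>i<n. q - 1)"
      using bounded[OF that] by (subst sum.distrib[symmetric]) (intro sum.cong, auto)
    then show ?thesis
      by (simp add: total_degree_def reflect_def mult.commute)
  qed
  have "inj_on reflect {e\<in>E. s < total_degree n e}"
    by (rule inj_on_inverseI[where g = reflect]) (simp add: reflect_reflect)
  moreover have "reflect ` {e\<in>E. s < total_degree n e} \<subseteq> {e\<in>E. total_degree n e \<le> s'}"
    using reflect_E degree_reflect assms(2) by fastforce
  ultimately show ?thesis
    unfolding num_monomials_def E_def[symmetric] by (intro card_inj_on_le) (auto simp: E_def)
qed

lemma card_exponents_le_num_monomials:
  assumes "0 < q" "(q - 1) * n \<le> s + s' + 1"
  shows "q ^ n \<le> num_monomials q n s + num_monomials q n s'"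
proof -
  let ?E = "exponents q n"
  have "card ?E = card ({e\<in>?E. s < total_degree n e} \<union> {e\<in>?E. total_degree n e \<le> s})"
    by (rule arg_cong[where f = card]) auto
  also have "\<dots> = card {e\<in>?E. s < total_degree n e} + num_monomials q n s"
    unfolding num_monomials_def by (rule card_Un_disjoint) auto
  finally show ?thesis
    using card_degree_gt_le_num_monomials[OF assms] by (simp add: card_exponents)
qed

lemma num_monomials_le_power_sum:
  fixes y :: real
  assumes "0 < y" "y \<le> 1"
  shows "num_monomials q n s \<le> (1 / y) ^ s * (\<Sum>k<q. y ^ k) ^ n"
proof -
  have "real (num_monomials q n s) = (\<Sum>e\<in>{e\<in>exponents q n. total_degree n e \<le> s}. 1)"
    by (simp add: num_monomials_def)
  also have "\<dots> \<le> (\<Sum>e\<in>{e\<in>exponents q n. total_degree n e \<le> s}. (1 / y) ^ s * y ^ total_degree n e)"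
  proof (intro sum_mono)
    fix e assume "e \<in> {e\<in>exponents q n. total_degree n e \<le> s}"
    then have "y ^ s \<le> y ^ total_degree n e"
      using assms by (intro power_decreasing) auto
    then show "1 \<le> (1 / y) ^ s * y ^ total_degree n e"
      using assms by (simp add: field_simps power_divide)
  qed
  also have "\<dots> \<le> (\<Sum>e\<in>exponents q n. (1 / y) ^ s * y ^ total_degree n e)"
    using assms by (intro sum_mono2) auto
  also have "\<dots> = (1 / y) ^ s * (\<Sum>e\<in>exponents q n. y ^ total_degree n e)"
    by (simp add: sum_distrib_left)
  also have "(\<Sum>e\<in>exponents q n. y ^ total_degree n e) = (\<Sum>e\<in>exponents q n. \<Prod>i<n. y ^ e i)"
    by (simp add: total_degree_def power_sum)
  also have "\<dots> = (\<Prod>i<n. \<Sum>k<q. y ^ k)"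
    unfolding exponents_def by (rule prod_sum_PiE[symmetric]) auto
  finally show ?thesis
    by simp
qed

text \<open>The function \<open>y \<mapsto> y powr (- (q - 1) / 3) * (\<Sum>k<q. y ^ k)\<close> equals \<open>q\<close> at \<open>y = 1\<close>
  and has derivative \<open>q (q - 1) / 6 > 0\<close> there.\<close>
lemma exists_weighted_power_sum_less:
  assumes "2 \<le> q"
  shows "\<exists>y::real. 0 < y \<and> y < 1 \<and> (1 / y) powr ((real q - 1) / 3) * (\<Sum>k<q. y ^ k) < q"
proof -
  define \<alpha> where "\<alpha> = (real q - 1) / 3"
  define f where "f = (\<lambda>y::real. y powr (- \<alpha>) * (\<Sum>k<q. y ^ k))"
  have "(f has_real_derivative
      (- \<alpha>) * 1 powr (- \<alpha> - 1) * (\<Sum>k<q. 1 ^ k) + (\<Sum>k<q. real k * 1 ^ (k - Suc 0)) * 1 powr (- \<alpha>)) (at 1)"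
    unfolding f_def by (intro DERIV_mult has_real_derivative_powr DERIV_sum DERIV_pow) auto
  moreover have "(\<Sum>k<q. real k) = real q * (real q - 1) / 2"
    by (induction q) (auto simp: field_simps)
  ultimately have "(f has_real_derivative real q * (real q - 1) / 6) (at 1)"
    by (simp add: \<alpha>_def field_simps)
  moreover have "real q * (real q - 1) / 6 > 0"
    using assms by simp
  ultimately obtain d where "d > 0" and decreasing: "\<And>h. 0 < h \<Longrightarrow> h < d \<Longrightarrow> f (1 - h) < f 1"
    using DERIV_pos_inc_left by blast
  define y where "y = 1 - min (d / 2) (1 / 2)"
  have "0 < y" "y < 1"
    using \<open>d > 0\<close> by (auto simp: y_def)
  moreover have "f y < q"
    using decreasing[of "min (d / 2) (1 / 2)"] \<open>d > 0\<close> by (simp add: y_def f_def)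
  moreover have "(1 / y) powr \<alpha> = y powr (- \<alpha>)"
    by (simp add: powr_minus_divide powr_divide)
  ultimately show ?thesis
    by (intro exI[of _ y]) (simp add: f_def \<alpha>_def)
qed

lemma num_monomials_exponential_bound:
  assumes "2 \<le> q"
  shows "\<exists>C \<Gamma> :: real. 0 < C \<and> 0 < \<Gamma> \<and> \<Gamma> < q \<and>
    (\<forall>n. num_monomials q n ((q - 1) * n div 3 + 1) \<le> C * \<Gamma> ^ n)"
proof -
  obtain y :: real where y: "0 < y" "y < 1" "(1 / y) powr ((real q - 1) / 3) * (\<Sum>k<q. y ^ k) < q"
    using exists_weighted_power_sum_less[OF assms] by blast
  define \<beta> where "\<beta> = (1 / y) powr ((real q - 1) / 3)"
  define \<Gamma> where "\<Gamma> = \<beta> * (\<Sum>k<q. y ^ k)"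
  have "(\<Sum>k<q. y ^ k) > 0"
    using assms y by (intro sum_pos) (auto simp: lessThan_empty_iff)
  then have "\<Gamma> > 0"
    using y by (simp add: \<Gamma>_def \<beta>_def)
  have "num_monomials q n ((q - 1) * n div 3 + 1) \<le> (1 / y) * \<Gamma> ^ n" for n
  proof -
    define t where "t = (q - 1) * n div 3"
    have "3 * t \<le> (q - 1) * n"
      by (simp add: t_def)
    then have "real t \<le> real ((q - 1) * n) / 3"
      by linarith
    also have "\<dots> = (real q - 1) / 3 * real n"
      using assms by (simp add: of_nat_diff)
    finally have "(1 / y) powr real t \<le> (1 / y) powr ((real q - 1) / 3 * real n)"
      using y by (intro powr_mono) auto
    also have "\<dots> = \<beta> ^ n"
      using y by (simp add: \<beta>_def powr_powr powr_realpow[symmetric])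
    finally have "(1 / y) ^ (t + 1) \<le> (1 / y) * \<beta> ^ n"
      using y by (simp add: powr_realpow divide_right_mono)
    then have "(1 / y) ^ (t + 1) * (\<Sum>k<q. y ^ k) ^ n \<le> (1 / y) * \<beta> ^ n * (\<Sum>k<q. y ^ k) ^ n"
      using \<open>(\<Sum>k<q. y ^ k) > 0\<close> by (intro mult_right_mono) auto
    moreover have "num_monomials q n (t + 1) \<le> (1 / y) ^ (t + 1) * (\<Sum>k<q. y ^ k) ^ n"
      using y by (intro num_monomials_le_power_sum) auto
    ultimately show ?thesis
      by (simp add: t_def \<Gamma>_def power_mult_distrib mult.assoc)
  qed
  then show ?thesis
    using y \<open>\<Gamma> > 0\<close> by (intro exI[of _ "1 / y"] exI[of _ \<Gamma>]) (auto simp: \<Gamma>_def \<beta>_def)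
qed

section \<open>Vector spaces of functions\<close>

interpretation fun_vs: vector_space "\<lambda>(c::'a::field) (f::'b \<Rightarrow> 'a) x. c * f x"
  by unfold_locales (auto simp: fun_eq_iff algebra_simps)

lemma sum_fun_apply: "(\<Sum>a\<in>A. f a) x = (\<Sum>a\<in>A. f a x)"
  by (induction A rule: infinite_finite_induct) auto

definition delta :: "'b \<Rightarrow> 'b \<Rightarrow> 'a::zero_neq_one" where
  "delta p = (\<lambda>x. if x = p then 1 else 0)"

lemma inj_delta: "inj (delta :: 'b \<Rightarrow> 'b \<Rightarrow> 'a::zero_neq_one)"
  by (auto simp: inj_def delta_def fun_eq_iff split: if_splits)

lemma sum_scaled_delta_apply:
  fixes f :: "'b \<Rightarrow> 'a::field"
  assumes "finite Y"
  shows "(\<Sum>p\<in>Y. (\<lambda>x. f p * delta p x)) x = (if x \<in> Y then f x else 0)"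
proof -
  have "(\<Sum>p\<in>Y. f p * delta p x) = (\<Sum>p\<in>Y. if x = p then f p else 0)"
    by (intro sum.cong) (auto simp: delta_def)
  then show ?thesis
    using assms by (simp add: sum_fun_apply)
qed

lemma independent_delta: "fun_vs.independent (delta ` P :: ('b \<Rightarrow> 'a::field) set)"
  unfolding fun_vs.independent_explicit_module
proof (intro allI impI)
  fix T u v
  assume T: "finite T" "T \<subseteq> delta ` P" "(\<Sum>w\<in>T. (\<lambda>x. u w * w x)) = (0::'b \<Rightarrow> 'a)" and "v \<in> T"
  then obtain p where "v = delta p"
    by auto
  have "0 = (\<Sum>w\<in>T. u w * w p)"
    using fun_cong[OF T(3), of p] by (simp add: sum_fun_apply)
  also have "\<dots> = u v * v p + (\<Sum>w\<in>T - {v}. u w * w p)"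
    using T(1) \<open>v \<in> T\<close> by (rule sum.remove)
  also have "(\<Sum>w\<in>T - {v}. u w * w p) = 0"
  proof (intro sum.neutral ballI)
    fix w assume "w \<in> T - {v}"
    moreover obtain p' where "w = delta p'"
      using \<open>w \<in> T - {v}\<close> T(2) by auto
    ultimately have "p' \<noteq> p"
      using \<open>v = delta p\<close> by auto
    then show "u w * w p = 0"
      by (simp add: \<open>w = delta p'\<close> delta_def)
  qed
  finally show "u v = 0"
    by (simp add: \<open>v = delta p\<close> delta_def)
qed

lemma in_span_delta:
  assumes "finite Y" "\<And>u. u \<notin> Y \<Longrightarrow> f u = 0"
  shows "f \<in> fun_vs.span (delta ` Y)"
proof -
  have "f = (\<Sum>p\<in>Y. (\<lambda>x. f p * delta p x))"
    using assms by (auto simp: fun_eq_iff sum_scaled_delta_apply)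
  also have "\<dots> \<in> fun_vs.span (delta ` Y)"
    by (intro fun_vs.span_sum fun_vs.span_scale fun_vs.span_base) auto
  finally show ?thesis .
qed

lemma support_span_subset:
  assumes "P \<in> fun_vs.span B" "\<And>Q u. Q \<in> B \<Longrightarrow> u \<notin> X \<Longrightarrow> Q u = 0"
  shows "{u. P u \<noteq> (0::'a::field)} \<subseteq> X"
  using assms(1) by (induction rule: fun_vs.span_induct_alt) (auto simp: assms(2))

lemma support_add_psubset:
  fixes P Q :: "'b \<Rightarrow> 'a::ab_group_add"
  assumes "\<And>u. P u \<noteq> 0 \<Longrightarrow> Q u = 0" "Q \<noteq> 0"
  shows "{u. P u \<noteq> 0} \<subset> {u. (P + Q) u \<noteq> 0}"
proof -
  obtain v where "Q v \<noteq> 0"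
    using assms(2) by (auto simp: fun_eq_iff)
  then have "P v = 0"
    using assms(1) by blast
  then show ?thesis
    using assms(1) \<open>Q v \<noteq> 0\<close> by auto
qed

text \<open>Restriction to \<open>Y\<close> is injective on \<open>span B\<close>, so it maps \<open>B\<close> to an independent subset of
  \<open>span (delta ` Y)\<close>.\<close>
lemma card_independent_le_determining_set:
  fixes B :: "('b \<Rightarrow> 'a::field) set"
  assumes "finite Y" "fun_vs.independent B"
    and determined: "\<And>P. P \<in> fun_vs.span B \<Longrightarrow> (\<And>u. u \<in> Y \<Longrightarrow> P u = 0) \<Longrightarrow> P = 0"
  shows "card B \<le> card Y"
proof -
  define r where "r = (\<lambda>(P::'b \<Rightarrow> 'a) u. if u \<in> Y then P u else 0)"
  interpret r: module_hom "\<lambda>c (f::'b \<Rightarrow> 'a) x. c * f x" "\<lambda>c (f::'b \<Rightarrow> 'a) x. c * f x" r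
    by unfold_locales (auto simp: r_def fun_eq_iff algebra_simps)
  have "inj_on r (fun_vs.span B)"
  proof (rule inj_onI)
    fix P P' assume "P \<in> fun_vs.span B" "P' \<in> fun_vs.span B" "r P = r P'"
    then have "P - P' = 0"
      by (intro determined fun_vs.span_diff) (auto simp: r_def fun_eq_iff split: if_splits)
    then show "P = P'"
      by simp
  qed
  moreover have "r ` B \<subseteq> fun_vs.span (delta ` Y)"
  proof (rule image_subsetI)
    fix P show "r P \<in> fun_vs.span (delta ` Y)"
      using assms(1) by (rule in_span_delta) (simp add: r_def)
  qed
  moreover have "fun_vs.independent (r ` B)"
    using assms(2) \<open>inj_on r (fun_vs.span B)\<close> by (rule r.independent_injective_image)
  ultimately have "card (r ` B) \<le> card (delta ` Y :: ('b \<Rightarrow> 'a) set)"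
    using assms(1) fun_vs.independent_span_bound by blast
  also have "\<dots> \<le> card Y"
    using assms(1) by (rule card_image_le)
  finally show ?thesis
    using card_image[OF inj_on_subset[OF \<open>inj_on r (fun_vs.span B)\<close> fun_vs.span_superset]]
    by simp
qed

text \<open>A function of maximal support among those vanishing on \<open>Z\<close> has support of size at least
  \<open>card B - card Z\<close>: otherwise some nonzero function in \<open>span B\<close> vanishes on \<open>Z\<close> and on that
  support, and adding it enlarges the support.\<close>
lemma exists_vanishing_with_large_support:
  fixes B :: "('b \<Rightarrow> 'a::field) set"
  assumes "finite X" "Z \<subseteq> X" "fun_vs.independent B"
    and outside: "\<And>Q u. Q \<in> B \<Longrightarrow> u \<notin> X \<Longrightarrow> Q u = 0"
  shows "\<exists>P\<in>fun_vs.span B. (\<forall>u\<in>Z. P u = 0) \<and> card B \<le> card Z + card {u. P u \<noteq> 0}"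
proof -
  let ?supp = "\<lambda>P::'b \<Rightarrow> 'a. {u. P u \<noteq> 0}"
  let ?V = "\<lambda>P. P \<in> fun_vs.span B \<and> (\<forall>u\<in>Z. P u = 0)"
  have supp_X: "?supp P \<subseteq> X" if "P \<in> fun_vs.span B" for P
    using that outside by (rule support_span_subset)
  then have finite_supp: "finite (?supp P)" if "P \<in> fun_vs.span B" for P
    using that assms(1) by (meson finite_subset)
  have "?V 0"
    by (simp add: fun_vs.span_zero)
  moreover have "card (?supp P) < Suc (card X)" if "?V P" for P
    using card_mono[OF assms(1) supp_X] that by (simp add: le_imp_less_Suc)
  ultimately obtain P where P: "?V P"
    and P_max: "\<And>P'. ?V P' \<Longrightarrow> card (?supp P') \<le> card (?supp P)"
    using ex_has_greatest_nat[where P = ?V and f = "\<lambda>P. card (?supp P)"] by blast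
  have "card B \<le> card Z + card (?supp P)"
  proof (rule ccontr)
    assume "\<not> ?thesis"
    then have "card (Z \<union> ?supp P) < card B"
      using card_Un_le[of Z "?supp P"] by linarith
    moreover have "finite (Z \<union> ?supp P)"
      using finite_subset[OF assms(2,1)] finite_supp P by blast
    ultimately obtain Q where Q: "Q \<in> fun_vs.span B" "\<And>u. u \<in> Z \<union> ?supp P \<Longrightarrow> Q u = 0" "Q \<noteq> 0"
      using card_independent_le_determining_set[OF _ assms(3)] by (meson not_le)
    have "?V (P + Q)"
      using P Q by (simp add: fun_vs.span_add)
    have "?supp P \<subset> ?supp (P + Q)"
      using Q(2,3) by (intro support_add_psubset) auto
    then have "card (?supp P) < card (?supp (P + Q))"
      by (rule psubset_card_mono[OF finite_supp[OF conjunct1[OF \<open>?V (P + Q)\<close>]]])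
    then show False
      using P_max[OF \<open>?V (P + Q)\<close>] by simp
  qed
  then show ?thesis
    using P by blast
qed

section \<open>Monomial functions on \<open>F_q^n\<close>\<close>

definition monomial :: "nat \<Rightarrow> (nat \<Rightarrow> nat) \<Rightarrow> (nat \<Rightarrow> 'a::comm_semiring_1) \<Rightarrow> 'a" where
  "monomial n e x = (\<Prod>i<n. x i ^ e i)"

definition monomial_fun :: "nat \<Rightarrow> (nat \<Rightarrow> nat) \<Rightarrow> (nat \<Rightarrow> 'a::comm_semiring_1) \<Rightarrow> 'a" where
  "monomial_fun n e x = (if x \<in> Fqn n then monomial n e x else 0)"

lemma finite_Fqn [simp]: "finite (Fqn n :: (nat \<Rightarrow> 'a::finite) set)"
  by (simp add: Fqn_def finite_PiE)

lemma card_Fqn: "card (Fqn n :: (nat \<Rightarrow> 'a::finite) set) = card (UNIV :: 'a set) ^ n"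
  by (simp add: Fqn_def card_PiE)

lemma two_le_card_field: "2 \<le> card (UNIV :: 'a::{finite,field} set)"
proof -
  have "card {0::'a, 1} \<le> card (UNIV :: 'a set)"
    by (rule card_mono) auto
  then show ?thesis
    by simp
qed

lemma field_power_card_minus_one:
  fixes x :: "'a::{finite,field}"
  assumes "x \<noteq> 0"
  shows "x ^ (card (UNIV :: 'a set) - 1) = 1"
proof -
  let ?U = "UNIV - {0::'a}"
  have "x ^ card ?U * (\<Prod>y\<in>?U. y) = (\<Prod>y\<in>?U. x * y)"
    by (simp add: prod.distrib)
  also have "\<dots> = (\<Prod>y\<in>?U. y)"
    by (rule prod.reindex_bij_witness[of _ "\<lambda>y. y / x" "\<lambda>y. x * y"]) (use assms in auto)
  finally show ?thesis
    by (simp add: card_Diff_singleton)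
qed

text \<open>The point indicator on a finite field is \<open>t \<mapsto> 1 - (t - s) ^ (q - 1)\<close>.\<close>
lemma delta_eq_univariate_poly:
  fixes s :: "'a::{finite,field}"
  shows "\<exists>g. \<forall>t. delta s t = (\<Sum>k<card (UNIV :: 'a set). g k * t ^ k)"
proof -
  let ?q = "card (UNIV :: 'a set)"
  define g where "g k = (if k = 0 then 1 else 0) - of_nat ((?q - 1) choose k) * (- s) ^ (?q - 1 - k)" for k
  have "{..<?q} = {..?q - 1}"
    using two_le_card_field[where 'a = 'a] by auto
  have "(\<Sum>k<?q. g k * t ^ k) = 1 - (t - s) ^ (?q - 1)" for t
  proof -
    have "(t - s) ^ (?q - 1) = (\<Sum>k<?q. of_nat ((?q - 1) choose k) * (- s) ^ (?q - 1 - k) * t ^ k)"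
      using binomial_ring[of t "- s" "?q - 1"] \<open>{..<?q} = {..?q - 1}\<close> by (simp add: mult_ac)
    moreover have "(\<Sum>k<?q. (if k = 0 then 1 else 0) * t ^ k) = (\<Sum>k<?q. if k = 0 then 1 else 0)"
      by (rule sum.cong) simp_all
    moreover have "(\<Sum>k<?q. if k = 0 then 1 else (0::'a)) = 1"
      using two_le_card_field[where 'a = 'a] by simp
    ultimately show ?thesis
      by (simp add: g_def left_diff_distrib sum_subtractf)
  qed
  moreover have "1 - (t - s) ^ (?q - 1) = delta s t" for t
    using two_le_card_field[where 'a = 'a] field_power_card_minus_one[of "t - s"]
    by (cases "t = s") (auto simp: delta_def)
  ultimately have "delta s t = (\<Sum>k<?q. g k * t ^ k)" for t
    by simp
  then show ?thesis
    by blast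
qed

lemma prod_poly_in_span_monomials:
  fixes g :: "nat \<Rightarrow> nat \<Rightarrow> 'a::field"
  shows "(\<lambda>x. if x \<in> Fqn n then \<Prod>i<n. \<Sum>k<q. g i k * x i ^ k else 0)
    \<in> fun_vs.span (monomial_fun n ` exponents q n)"
proof -
  have "(\<Prod>i<n. \<Sum>k<q. g i k * x i ^ k) = (\<Sum>e\<in>exponents q n. (\<Prod>i<n. g i (e i)) * monomial n e x)" for x
    unfolding exponents_def monomial_def prod.distrib[symmetric] by (rule prod_sum_PiE) auto
  then have "(\<lambda>x. if x \<in> Fqn n then \<Prod>i<n. \<Sum>k<q. g i k * x i ^ k else 0)
      = (\<Sum>e\<in>exponents q n. (\<lambda>x. (\<Prod>i<n. g i (e i)) * monomial_fun n e x))"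
    by (auto simp: fun_eq_iff sum_fun_apply monomial_fun_def)
  also have "\<dots> \<in> fun_vs.span (monomial_fun n ` exponents q n)"
    by (intro fun_vs.span_sum fun_vs.span_scale fun_vs.span_base) auto
  finally show ?thesis .
qed

lemma delta_in_span_monomials:
  fixes p :: "nat \<Rightarrow> 'a::{finite,field}"
  assumes "p \<in> Fqn n"
  shows "delta p \<in> fun_vs.span (monomial_fun n ` exponents (card (UNIV :: 'a set)) n)"
proof -
  have "\<forall>i. \<exists>g. \<forall>t. delta (p i) t = (\<Sum>k<card (UNIV :: 'a set). g k * t ^ k)"
    using delta_eq_univariate_poly by blast
  then obtain g where g: "\<And>i t. delta (p i) t = (\<Sum>k<card (UNIV :: 'a set). g i k * t ^ k)"
    by (metis choice)
  have "delta p x = (if x \<in> Fqn n then \<Prod>i<n. delta (p i) (x i) else (0::'a))" for x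
  proof (cases "x \<in> Fqn n \<and> x \<noteq> p")
    case True
    then obtain i where "x i \<noteq> p i"
      by auto
    moreover have "i < n"
      using calculation True assms by (metis Fqn_def PiE_arb lessThan_iff)
    ultimately have "(\<Prod>i<n. delta (p i) (x i)) = (0::'a)"
      by (intro prod_zero) (auto simp: delta_def)
    moreover have "delta p x = (0::'a)"
      using True by (simp add: delta_def)
    ultimately show ?thesis
      using True by simp
  next
    case False
    then show ?thesis
      using assms by (cases "x = p") (simp_all add: delta_def)
  qed
  then have "delta p = (\<lambda>x. if x \<in> Fqn n then \<Prod>i<n. \<Sum>k<card (UNIV :: 'a set). g i k * x i ^ k else 0)"
    by (simp add: g fun_eq_iff)
  then show ?thesis
    using prod_poly_in_span_monomials by simp
qed

text \<open>The \<open>q ^ n\<close> point indicators lie in the span of the at most \<open>q ^ n\<close> monomial functions, so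
  these form a basis.\<close>
lemma monomial_funs_independent_inj:
  shows "fun_vs.independent (monomial_fun n ` exponents (card (UNIV :: 'a set)) n :: ((nat \<Rightarrow> 'a::{finite,field}) \<Rightarrow> 'a) set)"
    and "inj_on (monomial_fun n :: _ \<Rightarrow> (nat \<Rightarrow> 'a) \<Rightarrow> 'a) (exponents (card (UNIV :: 'a set)) n)"
proof -
  define M where "M = (monomial_fun n ` exponents (card (UNIV :: 'a set)) n :: ((nat \<Rightarrow> 'a) \<Rightarrow> 'a) set)"
  define D where "D = (delta ` Fqn n :: ((nat \<Rightarrow> 'a) \<Rightarrow> 'a) set)"
  obtain B where B: "B \<subseteq> M" "fun_vs.independent B" "M \<subseteq> fun_vs.span B"
    using fun_vs.maximal_independent_subset by blast
  have "finite M"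
    by (simp add: M_def)
  then have "finite B"
    using B(1) finite_subset by blast
  have "D \<subseteq> fun_vs.span M"
    unfolding D_def M_def using delta_in_span_monomials by blast
  also have "\<dots> \<subseteq> fun_vs.span B"
    using fun_vs.span_mono[OF B(3)] by (simp add: fun_vs.span_span)
  finally have "D \<subseteq> fun_vs.span B" .
  moreover have "fun_vs.independent D"
    by (simp add: D_def independent_delta)
  ultimately have "card D \<le> card B"
    using \<open>finite B\<close> fun_vs.independent_span_bound by blast
  moreover have "card D = card (UNIV :: 'a set) ^ n"
    unfolding D_def by (simp add: card_image inj_on_subset[OF inj_delta] card_Fqn)
  moreover have "card B \<le> card M" "card M \<le> card (UNIV :: 'a set) ^ n"
    using B(1) \<open>finite M\<close> card_image_le[of "exponents (card (UNIV :: 'a set)) n" "monomial_fun n"]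
    by (auto simp: card_mono M_def card_exponents)
  ultimately have "B = M" "card M = card (exponents (card (UNIV :: 'a set)) n)"
    using B(1) \<open>finite M\<close> by (auto simp: card_subset_eq card_exponents)
  then show "fun_vs.independent M" "inj_on (monomial_fun n :: _ \<Rightarrow> (nat \<Rightarrow> 'a) \<Rightarrow> 'a) (exponents (card (UNIV :: 'a set)) n)"
    using B(2) by (auto simp: M_def intro: eq_card_imp_inj_on)
qed

lemma independent_low_degree_monomial_funs:
  "fun_vs.independent (monomial_fun n ` {e\<in>exponents (card (UNIV :: 'a set)) n. total_degree n e \<le> d}
    :: ((nat \<Rightarrow> 'a::{finite,field}) \<Rightarrow> 'a) set)"
  using monomial_funs_independent_inj(1) by (rule fun_vs.independent_mono) auto

lemma card_low_degree_monomial_funs: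
  "card (monomial_fun n ` {e\<in>exponents (card (UNIV :: 'a set)) n. total_degree n e \<le> d}
    :: ((nat \<Rightarrow> 'a::{finite,field}) \<Rightarrow> 'a) set) = num_monomials (card (UNIV :: 'a set)) n d"
  unfolding num_monomials_def
  by (rule card_image[OF inj_on_subset[OF monomial_funs_independent_inj(2)]]) auto

section \<open>Rank of bivariate polynomials\<close>

definition lincomb :: "nat \<Rightarrow> 'a::field \<Rightarrow> 'a \<Rightarrow> (nat \<Rightarrow> 'a) \<Rightarrow> (nat \<Rightarrow> 'a) \<Rightarrow> nat \<Rightarrow> 'a" where
  "lincomb n a b x y = restrict (\<lambda>i. a * x i + b * y i) {..<n}"

lemma lincomb_in_Fqn [simp]: "lincomb n a b x y \<in> Fqn n"
  by (simp add: lincomb_def Fqn_def)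

definition bipoly :: "nat \<Rightarrow> nat \<Rightarrow> nat \<Rightarrow> ((nat \<Rightarrow> 'a::field) \<Rightarrow> (nat \<Rightarrow> 'a) \<Rightarrow> 'a) \<Rightarrow> bool" where
  "bipoly q n d f \<longleftrightarrow> (\<exists>C. (\<forall>k j. d < total_degree n k + total_degree n j \<longrightarrow> C k j = 0) \<and>
     (\<forall>x\<in>Fqn n. \<forall>y\<in>Fqn n. f x y =
        (\<Sum>k\<in>exponents q n. \<Sum>j\<in>exponents q n. C k j * monomial n k x * monomial n j y)))"

lemma bipoly_zero: "bipoly q n d (\<lambda>x y. 0)"
  unfolding bipoly_def by (intro exI[of _ "\<lambda>_ _. 0"]) auto

lemma bipoly_scale_add:
  assumes "bipoly q n d f" "bipoly q n d g"
  shows "bipoly q n d (\<lambda>x y. c * f x y + g x y)"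
proof -
  obtain C1 C2 where
    C1: "\<forall>k j. d < total_degree n k + total_degree n j \<longrightarrow> C1 k j = 0"
      "\<forall>x\<in>Fqn n. \<forall>y\<in>Fqn n. f x y =
        (\<Sum>k\<in>exponents q n. \<Sum>j\<in>exponents q n. C1 k j * monomial n k x * monomial n j y)" and
    C2: "\<forall>k j. d < total_degree n k + total_degree n j \<longrightarrow> C2 k j = 0"
      "\<forall>x\<in>Fqn n. \<forall>y\<in>Fqn n. g x y =
        (\<Sum>k\<in>exponents q n. \<Sum>j\<in>exponents q n. C2 k j * monomial n k x * monomial n j y)"
    using assms unfolding bipoly_def by blast
  show ?thesis
    unfolding bipoly_def
  proof (intro exI[of _ "\<lambda>k j. c * C1 k j + C2 k j"] conjI ballI allI impI)
    fix x y :: "nat \<Rightarrow> 'a" assume "x \<in> Fqn n" "y \<in> Fqn n"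
    then show "c * f x y + g x y = (\<Sum>k\<in>exponents q n. \<Sum>j\<in>exponents q n.
        (c * C1 k j + C2 k j) * monomial n k x * monomial n j y)"
      using C1(2) C2(2) by (simp add: sum_distrib_left sum.distrib algebra_simps)
  qed (use C1(1) C2(1) in simp)
qed

lemma monomial_lincomb_expand:
  "monomial n e (lincomb n a b x y) = (\<Sum>k\<in>PiE {..<n} (\<lambda>i. {..e i}).
    (\<Prod>i<n. of_nat (e i choose k i) * a ^ k i * b ^ (e i - k i)) * monomial n k x * monomial n (\<lambda>i. e i - k i) y)"
proof -
  have "monomial n e (lincomb n a b x y) =
      (\<Prod>i<n. \<Sum>k\<le>e i. of_nat (e i choose k) * a ^ k * b ^ (e i - k) * x i ^ k * y i ^ (e i - k))"
    unfolding monomial_def lincomb_def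
    by (intro prod.cong refl) (simp add: binomial_ring power_mult_distrib mult_ac)
  also have "\<dots> = (\<Sum>k\<in>PiE {..<n} (\<lambda>i. {..e i}).
      \<Prod>i<n. of_nat (e i choose k i) * a ^ k i * b ^ (e i - k i) * x i ^ k i * y i ^ (e i - k i))"
    by (rule prod_sum_PiE) auto
  finally show ?thesis
    by (simp add: prod.distrib monomial_def)
qed

lemma bipoly_monomial_lincomb:
  assumes e: "e \<in> exponents q n" "total_degree n e \<le> d"
  shows "bipoly q n d (\<lambda>x y. monomial n e (lincomb n a b x y))"
proof -
  define K where "K = PiE {..<n} (\<lambda>i. {..e i})"
  define compl where "compl k = restrict (\<lambda>i. e i - k i) {..<n}" for k :: "nat \<Rightarrow> nat"
  define \<beta> where "\<beta> k = (\<Prod>i<n. of_nat (e i choose k i) * a ^ k i * b ^ (e i - k i))" for k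
  define C where "C k j = (if k \<in> K \<and> j = compl k then \<beta> k else 0)" for k j
  have e_less: "\<forall>i<n. e i < q"
    using e(1) by (auto simp: exponents_def PiE_def Pi_def)
  have K_exponents: "K \<subseteq> exponents q n" and compl_exponents: "compl ` K \<subseteq> exponents q n"
    using e_less by (auto simp: K_def compl_def exponents_def PiE_def Pi_def le_less_trans)
  have degree_compl: "total_degree n k + total_degree n (compl k) = total_degree n e" if "k \<in> K" for k
  proof -
    have "\<forall>i<n. k i \<le> e i"
      using that by (auto simp: K_def PiE_def Pi_def)
    then have "(\<Sum>i<n. k i) + (\<Sum>i<n. e i - k i) = (\<Sum>i<n. e i)"
      by (subst sum.distrib[symmetric]) (intro sum.cong, auto)
    then show ?thesis
      by (simp add: total_degree_def compl_def)
  qed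
  have "monomial n e (lincomb n a b x y) =
      (\<Sum>k\<in>exponents q n. \<Sum>j\<in>exponents q n. C k j * monomial n k x * monomial n j y)" for x y
  proof -
    have "monomial n e (lincomb n a b x y) =
        (\<Sum>k\<in>exponents q n \<inter> K. \<beta> k * monomial n k x * monomial n (compl k) y)"
      unfolding monomial_lincomb_expand using K_exponents
      by (simp add: Int_absorb1 K_def \<beta>_def compl_def monomial_def)
    also have "\<dots> = (\<Sum>k\<in>exponents q n. \<Sum>j\<in>exponents q n. C k j * monomial n k x * monomial n j y)"
      unfolding sum.inter_restrict[OF finite_exponents] using compl_exponents
      by (intro sum.cong refl) (auto simp: C_def if_distrib[of "\<lambda>c. c * _"] cong: if_cong)
    finally show ?thesis .
  qed
  moreover have "C k j = 0" if "d < total_degree n k + total_degree n j" for k j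
    using that degree_compl e(2) by (auto simp: C_def)
  ultimately show ?thesis
    unfolding bipoly_def by auto
qed

lemma bipoly_span_lincomb:
  assumes "P \<in> fun_vs.span (monomial_fun n ` {e\<in>exponents q n. total_degree n e \<le> d})"
  shows "bipoly q n d (\<lambda>x y. P (lincomb n a b x y))"
  using assms
proof (induction rule: fun_vs.span_induct_alt)
  case base
  then show ?case
    by (simp add: bipoly_zero)
next
  case (step c m Y)
  then obtain e where "m = monomial_fun n e" "e \<in> exponents q n" "total_degree n e \<le> d"
    by auto
  then show ?case
    using bipoly_scale_add[OF bipoly_monomial_lincomb step(2)] by (simp add: monomial_fun_def)
qed

text \<open>In each term of a polynomial of degree at most \<open>d\<close> one of the two variables has degree at
  most \<open>d div 2\<close>.\<close>
lemma bipoly_decompose: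
  assumes "bipoly q n d f"
  defines "L \<equiv> {e\<in>exponents q n. total_degree n e \<le> d div 2}"
  shows "\<exists>G H. \<forall>x\<in>Fqn n. \<forall>y\<in>Fqn n.
    f x y = (\<Sum>k\<in>L. monomial n k x * G k y) + (\<Sum>j\<in>L. H j x * monomial n j y)"
proof -
  let ?E = "exponents q n"
  obtain C where C0: "\<And>k j. d < total_degree n k + total_degree n j \<Longrightarrow> C k j = 0"
    and f: "\<forall>x\<in>Fqn n. \<forall>y\<in>Fqn n. f x y =
      (\<Sum>k\<in>?E. \<Sum>j\<in>?E. C k j * monomial n k x * monomial n j y)"
    using assms(1) unfolding bipoly_def by blast
  define G where "G k y = (\<Sum>j\<in>?E. C k j * monomial n j y)" for k y
  define H where "H j x = (\<Sum>k\<in>?E - L. C k j * monomial n k x)" for j x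
  have "L \<subseteq> ?E"
    by (auto simp: L_def)
  have C_high: "C k j = 0" if "k \<notin> L" "j \<notin> L" "k \<in> ?E" "j \<in> ?E" for k j
    using that by (intro C0) (auto simp: L_def)
  have split: "(\<Sum>k\<in>?E. \<Sum>j\<in>?E. C k j * monomial n k x * monomial n j y) =
      (\<Sum>k\<in>L. monomial n k x * G k y) + (\<Sum>j\<in>L. H j x * monomial n j y)" for x y
  proof -
    let ?T = "\<lambda>k j. C k j * monomial n k x * monomial n j y"
    have "(\<Sum>k\<in>?E. \<Sum>j\<in>?E. ?T k j) = (\<Sum>k\<in>L. \<Sum>j\<in>?E. ?T k j) + (\<Sum>k\<in>?E - L. \<Sum>j\<in>?E. ?T k j)"
      using \<open>L \<subseteq> ?E\<close> by (simp add: sum.subset_diff)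
    also have "(\<Sum>k\<in>L. \<Sum>j\<in>?E. ?T k j) = (\<Sum>k\<in>L. monomial n k x * G k y)"
      by (simp add: G_def sum_distrib_left mult_ac)
    also have "(\<Sum>k\<in>?E - L. \<Sum>j\<in>?E. ?T k j) = (\<Sum>j\<in>?E. \<Sum>k\<in>?E - L. ?T k j)"
      by (rule sum.swap)
    also have "\<dots> = (\<Sum>j\<in>L. \<Sum>k\<in>?E - L. ?T k j)"
    proof (rule sum.mono_neutral_right)
      show "\<forall>j\<in>?E - L. (\<Sum>k\<in>?E - L. ?T k j) = 0"
        using C_high by (auto intro!: sum.neutral)
    qed (use \<open>L \<subseteq> ?E\<close> in auto)
    also have "\<dots> = (\<Sum>j\<in>L. H j x * monomial n j y)"
      by (simp add: H_def sum_distrib_right)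
    finally show ?thesis .
  qed
  show ?thesis
    using f split by (intro exI[of _ G] exI[of _ H]) simp
qed

lemma bipoly_rows_span:
  assumes "bipoly q n d f" "I \<subseteq> Fqn n"
  shows "\<exists>F. finite F \<and> card F \<le> 2 * num_monomials q n (d div 2) \<and>
    (\<forall>x\<in>Fqn n. (\<lambda>y. if y \<in> I then f x y else 0) \<in> fun_vs.span F)"
proof -
  define L where "L = {e\<in>exponents q n. total_degree n e \<le> d div 2}"
  obtain G H where GH: "\<forall>x\<in>Fqn n. \<forall>y\<in>Fqn n.
      f x y = (\<Sum>k\<in>L. monomial n k x * G k y) + (\<Sum>j\<in>L. H j x * monomial n j y)"
    using bipoly_decompose[OF assms(1)] unfolding L_def by blast
  define restr where "restr g = (\<lambda>y. if y \<in> I then g y else 0)" for g :: "(nat \<Rightarrow> 'a) \<Rightarrow> 'a"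
  define F where "F = (\<lambda>k. restr (G k)) ` L \<union> (\<lambda>j. restr (monomial n j)) ` L"
  have "finite L"
    by (simp add: L_def)
  have "card F \<le> card L + card L"
    unfolding F_def using \<open>finite L\<close> by (intro card_Un_le[THEN order_trans] add_mono card_image_le)
  moreover have "card L = num_monomials q n (d div 2)"
    by (simp add: L_def num_monomials_def)
  moreover have "restr (f x) \<in> fun_vs.span F" if "x \<in> Fqn n" for x
  proof -
    have "restr (f x) = (\<Sum>k\<in>L. (\<lambda>y. monomial n k x * restr (G k) y)) +
        (\<Sum>j\<in>L. (\<lambda>y. H j x * restr (monomial n j) y))"
      using GH that assms(2) by (auto simp: restr_def fun_eq_iff sum_fun_apply)
    also have "\<dots> \<in> fun_vs.span F"
      by (intro fun_vs.span_add fun_vs.span_sum fun_vs.span_scale fun_vs.span_base) (auto simp: F_def)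
    finally show ?thesis .
  qed
  ultimately show ?thesis
    using \<open>finite L\<close> by (intro exI[of _ F]) (auto simp: F_def restr_def)
qed

section \<open>Sets with only trivial solutions\<close>

definition only_trivial_solutions :: "nat \<Rightarrow> 'a::field \<Rightarrow> 'a \<Rightarrow> 'a \<Rightarrow> (nat \<Rightarrow> 'a) set \<Rightarrow> bool" where
  "only_trivial_solutions n a b c I \<longleftrightarrow>
    (\<forall>x\<in>I. \<forall>y\<in>I. \<forall>z\<in>I. (\<forall>i<n. a * x i + b * y i + c * z i = 0) \<longrightarrow> x = y)"

lemma lincomb_in_diagonal_imp_eq:
  assumes "only_trivial_solutions n a b c I" "a + b + c = 0" "x \<in> I" "y \<in> I"
    and "lincomb n a b x y \<in> (\<lambda>z. lincomb n a b z z) ` I"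
  shows "x = y"
proof -
  obtain z where "z \<in> I" and z: "lincomb n a b x y = lincomb n a b z z"
    using assms(5) by blast
  have "a * x i + b * y i + c * z i = 0" if "i < n" for i
  proof -
    have "a * x i + b * y i = (a + b) * z i"
      using fun_cong[OF z, of i] that by (simp add: lincomb_def distrib_right)
    then have "a * x i + b * y i + c * z i = (a + b + c) * z i"
      by (simp add: algebra_simps)
    then show ?thesis
      using assms(2) by simp
  qed
  then show ?thesis
    using assms(1,3,4) \<open>z \<in> I\<close> by (auto simp: only_trivial_solutions_def)
qed

lemma inj_on_lincomb_diagonal:
  assumes "a + b \<noteq> 0"
  shows "inj_on (\<lambda>z. lincomb n a b z z) (Fqn n)"
proof (rule inj_onI)
  fix z z' assume "z \<in> Fqn n" "z' \<in> Fqn n" and eq: "lincomb n a b z z = lincomb n a b z' z'"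
  have "(a + b) * z i = (a + b) * z' i" if "i < n" for i
    using fun_cong[OF eq, of i] that by (simp add: lincomb_def distrib_right)
  then show "z = z'"
    using assms \<open>z \<in> Fqn n\<close> \<open>z' \<in> Fqn n\<close> by (metis PiE_ext Fqn_def lessThan_iff mult_left_cancel)
qed

text \<open>The matrix \<open>(P (a x + b y))\<close> indexed by \<open>I \<times> I\<close> is diagonal, with nonzero diagonal entries
  exactly on the counted rows, and its rank is at most \<open>2 num_monomials q n (d div 2)\<close>.\<close>
lemma card_diagonal_support_le:
  assumes "a + b + c = 0" "I \<subseteq> Fqn n" "only_trivial_solutions n a b c I"
    and P: "P \<in> fun_vs.span (monomial_fun n ` {e\<in>exponents q n. total_degree n e \<le> d})"
    and vanish: "\<forall>u\<in>Fqn n - (\<lambda>z. lincomb n a b z z) ` I. P u = 0"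
  shows "card {x\<in>I. P (lincomb n a b x x) \<noteq> 0} \<le> 2 * num_monomials q n (d div 2)"
proof -
  define J where "J = {x\<in>I. P (lincomb n a b x x) \<noteq> 0}"
  obtain F where F: "finite F" "card F \<le> 2 * num_monomials q n (d div 2)"
    "\<forall>x\<in>Fqn n. (\<lambda>y. if y \<in> I then P (lincomb n a b x y) else 0) \<in> fun_vs.span F"
    using bipoly_rows_span[OF bipoly_span_lincomb[OF P] assms(2)] by blast
  have "delta x \<in> fun_vs.span F" if "x \<in> J" for x
  proof -
    have row: "(if y \<in> I then P (lincomb n a b x y) else 0) = P (lincomb n a b x x) * delta x y" for y
    proof -
      have "P (lincomb n a b x y) = 0" if "y \<in> I" "y \<noteq> x"
      proof -
        have "lincomb n a b x y \<notin> (\<lambda>z. lincomb n a b z z) ` I"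
          using that \<open>x \<in> J\<close> lincomb_in_diagonal_imp_eq[OF assms(3,1)] by (auto simp: J_def)
        then show ?thesis
          using vanish by simp
      qed
      then show ?thesis
        using \<open>x \<in> J\<close> by (auto simp: delta_def J_def)
    qed
    have "(\<lambda>y. inverse (P (lincomb n a b x x)) * (if y \<in> I then P (lincomb n a b x y) else 0))
        \<in> fun_vs.span F"
      using F(3) \<open>x \<in> J\<close> assms(2) by (intro fun_vs.span_scale) (auto simp: J_def)
    then show ?thesis
      using \<open>x \<in> J\<close> by (simp add: row J_def)
  qed
  then have "delta ` J \<subseteq> fun_vs.span F"
    by blast
  then have "card (delta ` J :: ((nat \<Rightarrow> 'a) \<Rightarrow> 'a) set) \<le> card F"
    using fun_vs.independent_span_bound[OF F(1) independent_delta] by blast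
  moreover have "card (delta ` J :: ((nat \<Rightarrow> 'a) \<Rightarrow> 'a) set) = card J"
    by (rule card_image) (rule inj_on_subset[OF inj_delta subset_UNIV])
  ultimately show ?thesis
    using F(2) by (simp add: J_def)
qed

lemma card_support_le_card_preimage:
  assumes "{u. P u \<noteq> 0} \<subseteq> X" "finite I" "\<forall>u\<in>X - f ` I. P u = 0"
  shows "card {u. P u \<noteq> 0} \<le> card {x\<in>I. P (f x) \<noteq> 0}"
proof -
  have "{u. P u \<noteq> 0} \<subseteq> f ` {x\<in>I. P (f x) \<noteq> 0}"
    using assms(1,3) by blast
  then have "card {u. P u \<noteq> 0} \<le> card (f ` {x\<in>I. P (f x) \<noteq> 0})"
    using assms(2) by (intro card_mono) auto
  also have "\<dots> \<le> card {x\<in>I. P (f x) \<noteq> 0}"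
    using assms(2) by (intro card_image_le) auto
  finally show ?thesis .
qed

text \<open>The Ellenberg--Gijswijt bound: a polynomial of degree at most \<open>d\<close> vanishing off
  \<open>S = (a + b) I\<close> has a large support inside \<open>S\<close>, but the rank bound above limits that support.\<close>
lemma card_only_trivial_solutions_le:
  fixes a b c :: "'a::{finite,field}"
  assumes "c \<noteq> 0" "a + b + c = 0" "I \<subseteq> Fqn n" "only_trivial_solutions n a b c I"
  defines "q \<equiv> card (UNIV :: 'a set)"
  shows "card I + num_monomials q n d \<le> q ^ n + 2 * num_monomials q n (d div 2)"
proof -
  let ?X = "Fqn n :: (nat \<Rightarrow> 'a) set"
  define diag where "diag z = lincomb n a b z z" for z
  define M where "M = (monomial_fun n ` {e\<in>exponents q n. total_degree n e \<le> d} :: ((nat \<Rightarrow> 'a) \<Rightarrow> 'a) set)"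
  have "a + b \<noteq> 0"
    using assms(1,2) by (metis add_0_left add_cancel_left_left)
  then have "card (diag ` I) = card I"
    using inj_on_lincomb_diagonal assms(3) by (force simp: diag_def intro: card_image inj_on_subset)
  moreover have "diag ` I \<subseteq> ?X"
    by (auto simp: diag_def)
  ultimately have card_complement: "card (?X - diag ` I) = q ^ n - card I"
    by (simp add: card_Diff_subset finite_subset card_Fqn q_def)
  have "card I \<le> q ^ n"
    using card_mono[OF finite_Fqn assms(3)] by (simp add: card_Fqn q_def)
  have "fun_vs.independent M" "card M = num_monomials q n d"
    unfolding M_def q_def by (rule independent_low_degree_monomial_funs card_low_degree_monomial_funs)+
  moreover have M_outside: "\<And>Q u. Q \<in> M \<Longrightarrow> u \<notin> ?X \<Longrightarrow> Q u = 0"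
    by (auto simp: M_def monomial_fun_def)
  ultimately obtain P where P: "P \<in> fun_vs.span M" "\<forall>u\<in>?X - diag ` I. P u = 0"
    and large: "num_monomials q n d \<le> card (?X - diag ` I) + card {u. P u \<noteq> 0}"
    using exists_vanishing_with_large_support[of ?X "?X - diag ` I" M] by auto
  have "{u. P u \<noteq> 0} \<subseteq> ?X"
    using support_span_subset[of P M ?X] P(1) M_outside by blast
  then have "card {u. P u \<noteq> 0} \<le> card {x\<in>I. P (diag x) \<noteq> 0}"
    using finite_subset[OF assms(3) finite_Fqn] P(2) by (rule card_support_le_card_preimage)
  also have "\<dots> \<le> 2 * num_monomials q n (d div 2)"
    using card_diagonal_support_le[OF assms(2,3,4)] P by (simp add: M_def diag_def)
  finally show ?thesis
    using large card_complement \<open>card I \<le> q ^ n\<close> by linarith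
qed

lemma card_only_trivial_solutions_exponential:
  obtains C \<Gamma> :: real where "0 < C" "0 < \<Gamma>" "\<Gamma> < card (UNIV :: 'a::{finite,field} set)"
    "\<And>n (a::'a) b c I. c \<noteq> 0 \<Longrightarrow> a + b + c = 0 \<Longrightarrow> I \<subseteq> Fqn n \<Longrightarrow>
      only_trivial_solutions n a b c I \<Longrightarrow> card I \<le> C * \<Gamma> ^ n"
proof -
  let ?q = "card (UNIV :: 'a set)"
  obtain C \<Gamma> :: real where "0 < C" "0 < \<Gamma>" "\<Gamma> < ?q"
    and num_monomials_le: "\<And>n. num_monomials ?q n ((?q - 1) * n div 3 + 1) \<le> C * \<Gamma> ^ n"
    using num_monomials_exponential_bound[OF two_le_card_field] by blast
  have "card I \<le> 3 * C * \<Gamma> ^ n"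
    if "c \<noteq> 0" "a + b + c = 0" "I \<subseteq> Fqn n" "only_trivial_solutions n a b c I"
    for n and a b c :: 'a and I
  proof -
    define t where "t = (?q - 1) * n div 3"
    have "card I + num_monomials ?q n (2 * t) \<le> ?q ^ n + 2 * num_monomials ?q n t"
      using card_only_trivial_solutions_le[OF that, of "2 * t"] by simp
    moreover have "?q ^ n \<le> num_monomials ?q n (2 * t) + num_monomials ?q n (t + 1)"
      using two_le_card_field[where 'a = 'a] by (intro card_exponents_le_num_monomials) (auto simp: t_def)
    moreover have "num_monomials ?q n t \<le> num_monomials ?q n (t + 1)"
      by (rule num_monomials_mono) simp
    ultimately have "card I \<le> 3 * num_monomials ?q n (t + 1)"
      by linarith
    then show ?thesis
      using num_monomials_le[of n] by (simp add: t_def)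
  qed
  with \<open>0 < C\<close> \<open>0 < \<Gamma>\<close> \<open>\<Gamma> < ?q\<close> show thesis
    by (intro that[of "3 * C" \<Gamma>]) auto
qed

section \<open>Points lying in few solutions\<close>

lemma card_partners_le_num_solutions:
  assumes "finite A" "A' \<subseteq> A"
  shows "card {y\<in>A'. \<exists>z\<in>A. \<forall>i<n. a * x i + b * y i + c * z i = 0} \<le> num_solutions n A a b c x"
proof -
  let ?S = "{(y, z). y \<in> A \<and> z \<in> A \<and> (\<forall>i<n. a * x i + b * y i + c * z i = 0)}"
  have "finite ?S"
    using finite_subset[of ?S "A \<times> A"] assms(1) by auto
  have "{y\<in>A'. \<exists>z\<in>A. \<forall>i<n. a * x i + b * y i + c * z i = 0} \<subseteq> fst ` ?S"
    using assms(2) by (auto intro: image_eqI[of _ fst "(y, z)" for y z])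
  then have "card {y\<in>A'. \<exists>z\<in>A. \<forall>i<n. a * x i + b * y i + c * z i = 0} \<le> card (fst ` ?S)"
    using \<open>finite ?S\<close> by (intro card_mono) auto
  also have "\<dots> \<le> num_solutions n A a b c x"
    unfolding num_solutions_def using \<open>finite ?S\<close> by (rule card_image_le)
  finally show ?thesis .
qed

text \<open>The points of \<open>A\<close> lying in few solutions span a digraph of small out-degree, and an
  independent set of it has only trivial solutions.\<close>
lemma card_Diff_A_eps_le:
  fixes A :: "(nat \<Rightarrow> 'a::field) set" and B :: real
  assumes "finite A"
    and bound: "\<And>I. I \<subseteq> A \<Longrightarrow> only_trivial_solutions n a b c I \<Longrightarrow> card I \<le> B"
  shows "card (A - A_eps n A a b c \<epsilon>) \<le> (2 * card A powr \<epsilon> + 1) * B"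
proof -
  define A' where "A' = A - A_eps n A a b c \<epsilon>"
  define R where "R x y \<longleftrightarrow> (\<exists>z\<in>A. \<forall>i<n. a * x i + b * y i + c * z i = 0)" for x y
  define K where "K = nat \<lfloor>card A powr \<epsilon>\<rfloor>"
  have "card {y\<in>A'. R x y} \<le> K" if "x \<in> A'" for x
  proof -
    have "card {y\<in>A'. R x y} \<le> num_solutions n A a b c x"
      unfolding R_def using assms(1) by (rule card_partners_le_num_solutions) (auto simp: A'_def)
    moreover have "num_solutions n A a b c x < card A powr \<epsilon>"
      using that by (auto simp: A'_def A_eps_def)
    ultimately show ?thesis
      unfolding K_def by linarith
  qed
  then obtain I where I: "I \<subseteq> A'" "\<forall>x\<in>I. \<forall>y\<in>I. R x y \<longrightarrow> x = y" "card A' \<le> (2 * K + 1) * card I"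
    using exists_large_independent_subset[of A' R K] assms(1) by (auto simp: A'_def)
  have "only_trivial_solutions n a b c I"
    using I(1,2) by (auto simp: only_trivial_solutions_def R_def A'_def)
  then have "card I \<le> B"
    using I(1) bound by (auto simp: A'_def)
  moreover have "0 \<le> B"
    using bound[of "{}"] by (simp add: only_trivial_solutions_def)
  moreover have "real K \<le> card A powr \<epsilon>"
    by (simp add: K_def)
  ultimately have "real (2 * K + 1) * card I \<le> (2 * card A powr \<epsilon> + 1) * B"
    by (intro mult_mono) auto
  moreover have "real (card A') \<le> real (2 * K + 1) * card I"
    using I(3) by (metis of_nat_le_iff of_nat_mult)
  ultimately show ?thesis
    by (simp add: A'_def)
qed

lemma card_A_eps_ge:
  fixes A :: "(nat \<Rightarrow> 'a::field) set" and B \<delta> :: real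
  assumes "finite A" "(2 * card A powr \<epsilon> + 1) * B \<le> \<delta> * card A"
    and "\<And>I. I \<subseteq> A \<Longrightarrow> only_trivial_solutions n a b c I \<Longrightarrow> card I \<le> B"
  shows "(1 - \<delta>) * card A \<le> card (A_eps n A a b c \<epsilon>)"
proof -
  have "card (A - A_eps n A a b c \<epsilon>) \<le> (2 * card A powr \<epsilon> + 1) * B"
    using assms(1,3) by (rule card_Diff_A_eps_le)
  then have "card (A - A_eps n A a b c \<epsilon>) \<le> \<delta> * card A"
    using assms(2) by linarith
  moreover have "card (A - A_eps n A a b c \<epsilon>) = card A - card (A_eps n A a b c \<epsilon>)"
    using assms(1) by (intro card_Diff_subset) (auto simp: A_eps_def)
  moreover have "card (A_eps n A a b c \<epsilon>) \<le> card A"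
    using assms(1) by (intro card_mono) (auto simp: A_eps_def)
  ultimately have "real (card A) - card (A_eps n A a b c \<epsilon>) \<le> \<delta> * card A"
    by (simp add: of_nat_diff)
  then show ?thesis
    by (simp add: left_diff_distrib)
qed

section \<open>Choice of the exponents\<close>

text \<open>With \<open>cq = (G + q) / 2\<close> and \<open>\<epsilon>\<close> chosen so that \<open>cq powr (1 - \<epsilon>) = sqrt (cq * G)\<close>.\<close>
lemma exists_exponent_gap:
  fixes G q :: real
  assumes "1 \<le> G" "G < q"
  obtains \<epsilon> cq where "0 < \<epsilon>" "\<epsilon> < 1" "1 < cq" "cq < q" "G < cq powr (1 - \<epsilon>)"
proof
  define cq where "cq = (G + q) / 2"
  show "1 < cq" "cq < q"
    using assms by (auto simp: cq_def)
  then have "0 < ln cq" "0 \<le> ln G" "ln G < ln cq"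
    using assms by (auto simp: cq_def)
  define \<epsilon> where "\<epsilon> = (ln cq - ln G) / (2 * ln cq)"
  show "0 < \<epsilon>" "\<epsilon> < 1"
    using \<open>0 < ln cq\<close> \<open>0 \<le> ln G\<close> \<open>ln G < ln cq\<close> by (auto simp: \<epsilon>_def field_simps)
  have "ln G < (1 - \<epsilon>) * ln cq"
    using \<open>0 < ln cq\<close> \<open>ln G < ln cq\<close> by (simp add: \<epsilon>_def field_simps)
  have "G = exp (ln G)"
    using assms(1) by simp
  also have "\<dots> < exp ((1 - \<epsilon>) * ln cq)"
    using \<open>ln G < (1 - \<epsilon>) * ln cq\<close> by simp
  also have "\<dots> = cq powr (1 - \<epsilon>)"
    using \<open>1 < cq\<close> by (simp add: powr_def mult.commute)
  finally show "G < cq powr (1 - \<epsilon>)" .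
qed

lemma exists_power_dominates:
  fixes G \<rho> K :: real
  assumes "0 < G" "G < \<rho>"
  shows "\<exists>N. \<forall>n\<ge>N. K * G ^ n \<le> \<rho> ^ n"
proof -
  have "1 < \<rho> / G"
    using assms by simp
  then obtain N where "K < (\<rho> / G) ^ N"
    using real_arch_pow by blast
  have "K * G ^ n \<le> \<rho> ^ n" if "N \<le> n" for n
  proof -
    have "K \<le> (\<rho> / G) ^ n"
      using \<open>K < (\<rho> / G) ^ N\<close> power_increasing[OF that, of "\<rho> / G"] \<open>1 < \<rho> / G\<close> by linarith
    then show ?thesis
      using assms(1) by (simp add: power_divide pos_le_divide_eq)
  qed
  then show ?thesis
    by blast
qed

lemma sublinear_bound_of_power_bound:
  fixes C \<Gamma> G cq \<epsilon> \<delta> x :: real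
  assumes "0 \<le> C" "0 \<le> \<Gamma>" "\<Gamma> \<le> G" "0 < \<epsilon>" "\<epsilon> < 1" "1 \<le> cq" "0 \<le> \<delta>"
    and "3 * C * G ^ n \<le> \<delta> * (cq powr (1 - \<epsilon>)) ^ n" "cq ^ n < x"
  shows "(2 * x powr \<epsilon> + 1) * (C * \<Gamma> ^ n) \<le> \<delta> * x"
proof -
  have "1 \<le> x"
    using assms(6,9) one_le_power[of cq n] by linarith
  then have "1 \<le> x powr \<epsilon>"
    using assms(4) by (simp add: ge_one_powr_ge_zero)
  have "(cq powr (1 - \<epsilon>)) ^ n = (cq ^ n) powr (1 - \<epsilon>)"
    using assms(6) by (simp add: powr_realpow[symmetric] powr_powr mult.commute)
  also have "\<dots> \<le> x powr (1 - \<epsilon>)"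
    using assms(5,6,9) by (intro powr_mono2) auto
  finally have "3 * C * G ^ n \<le> \<delta> * x powr (1 - \<epsilon>)"
    using assms(7,8) by (meson mult_left_mono order_trans)
  have "C * \<Gamma> ^ n \<le> C * G ^ n"
    using assms(1-3) by (simp add: mult_left_mono power_mono)
  then have "(2 * x powr \<epsilon> + 1) * (C * \<Gamma> ^ n) \<le> (3 * x powr \<epsilon>) * (C * G ^ n)"
    by (rule mult_mono[rotated]) (use \<open>1 \<le> x powr \<epsilon>\<close> assms(1,2) in auto)
  also have "\<dots> = x powr \<epsilon> * (3 * C * G ^ n)"
    by (simp add: mult_ac)
  also have "\<dots> \<le> x powr \<epsilon> * (\<delta> * x powr (1 - \<epsilon>))"
    using \<open>3 * C * G ^ n \<le> \<delta> * x powr (1 - \<epsilon>)\<close> by (rule mult_left_mono) simp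
  also have "\<dots> = \<delta> * x"
    using \<open>1 \<le> x\<close> by (simp add: powr_add[symmetric])
  finally show ?thesis .
qed

lemma eventually_sublinear_bound:
  fixes C \<Gamma> q :: real
  assumes "0 < C" "0 < \<Gamma>" "\<Gamma> < q" "1 < q"
  obtains \<epsilon> cq where "0 < \<epsilon>" "0 < cq" "cq < q"
    "\<And>\<delta>. 0 < \<delta> \<Longrightarrow> \<exists>N. \<forall>n\<ge>N. \<forall>x. cq ^ n < x \<longrightarrow> (2 * x powr \<epsilon> + 1) * (C * \<Gamma> ^ n) \<le> \<delta> * x"
proof -
  define G where "G = max \<Gamma> 1"
  have "1 \<le> G" "G < q" "\<Gamma> \<le> G"
    using assms by (auto simp: G_def)
  obtain \<epsilon> cq where \<epsilon>: "0 < \<epsilon>" "\<epsilon> < 1" and cq: "1 < cq" "cq < q"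
    and gap: "G < cq powr (1 - \<epsilon>)"
    by (rule exists_exponent_gap[OF \<open>1 \<le> G\<close> \<open>G < q\<close>])
  have "\<exists>N. \<forall>n\<ge>N. \<forall>x. cq ^ n < x \<longrightarrow> (2 * x powr \<epsilon> + 1) * (C * \<Gamma> ^ n) \<le> \<delta> * x" if "0 < \<delta>" for \<delta>
  proof -
    obtain N where N: "\<forall>n\<ge>N. 3 * C / \<delta> * G ^ n \<le> (cq powr (1 - \<epsilon>)) ^ n"
      using exists_power_dominates[of G "cq powr (1 - \<epsilon>)" "3 * C / \<delta>"] gap \<open>1 \<le> G\<close> by auto
    have "3 * C * G ^ n \<le> \<delta> * (cq powr (1 - \<epsilon>)) ^ n" if "N \<le> n" for n
      using N that \<open>0 < \<delta>\<close> by (simp add: field_simps)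
    then show ?thesis
      using \<epsilon> cq \<open>\<Gamma> \<le> G\<close> assms(1,2) \<open>0 < \<delta>\<close>
      by (intro exI[of _ N] allI impI sublinear_bound_of_power_bound) auto
  qed
  then show thesis
    using that[of \<epsilon> cq] \<epsilon> cq by auto
qed

theorem theorem1:
  shows "\<exists>\<epsilon>::real. \<epsilon> > 0 \<and> (\<exists>cq::real. 0 < cq \<and> cq < real (card (UNIV :: 'a::{finite,field} set)) \<and>
    (\<forall>\<delta>::real. \<delta> > 0 \<longrightarrow>
      (\<exists>N. \<forall>n\<ge>N. \<forall>A::(nat \<Rightarrow> 'a) set. A \<subseteq> Fqn n \<longrightarrow> real (card A) > cq ^ n \<longrightarrow>
         (\<forall>a b c::'a. a \<noteq> 0 \<and> b \<noteq> 0 \<and> c \<noteq> 0 \<and> a + b + c = 0 \<longrightarrow>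
            real (card (A_eps n A a b c \<epsilon>)) \<ge> (1 - \<delta>) * real (card A)))))"
proof -
  obtain C \<Gamma> :: real where "0 < C" "0 < \<Gamma>" "\<Gamma> < card (UNIV :: 'a set)"
    and bound: "\<And>n (a::'a) b c I. c \<noteq> 0 \<Longrightarrow> a + b + c = 0 \<Longrightarrow> I \<subseteq> Fqn n \<Longrightarrow>
      only_trivial_solutions n a b c I \<Longrightarrow> card I \<le> C * \<Gamma> ^ n"
    using card_only_trivial_solutions_exponential[where 'a = 'a] by blast
  moreover have "1 < real (card (UNIV :: 'a set))"
    using two_le_card_field[where 'a = 'a] by simp
  ultimately obtain \<epsilon> cq :: real where "0 < \<epsilon>" "0 < cq" "cq < card (UNIV :: 'a set)" and eventually:
      "\<And>\<delta>. 0 < \<delta> \<Longrightarrow> \<exists>N. \<forall>n\<ge>N. \<forall>x. cq ^ n < x \<longrightarrow> (2 * x powr \<epsilon> + 1) * (C * \<Gamma> ^ n) \<le> \<delta> * x"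
    using eventually_sublinear_bound[of C \<Gamma> "card (UNIV :: 'a set)"] by blast
  have "\<exists>N. \<forall>n\<ge>N. \<forall>A::(nat \<Rightarrow> 'a) set. A \<subseteq> Fqn n \<longrightarrow> real (card A) > cq ^ n \<longrightarrow>
      (\<forall>a b c::'a. a \<noteq> 0 \<and> b \<noteq> 0 \<and> c \<noteq> 0 \<and> a + b + c = 0 \<longrightarrow>
        real (card (A_eps n A a b c \<epsilon>)) \<ge> (1 - \<delta>) * real (card A))" if "0 < \<delta>" for \<delta> :: real
  proof -
    obtain N where N: "\<forall>n\<ge>N. \<forall>x. cq ^ n < x \<longrightarrow> (2 * x powr \<epsilon> + 1) * (C * \<Gamma> ^ n) \<le> \<delta> * x"
      using eventually[OF \<open>0 < \<delta>\<close>] by blast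
    have "(1 - \<delta>) * card A \<le> card (A_eps n A a b c \<epsilon>)"
      if "N \<le> n" "A \<subseteq> Fqn n" "cq ^ n < card A" "c \<noteq> 0" "a + b + c = 0" for n A and a b c :: 'a
      using N that bound[OF \<open>c \<noteq> 0\<close> \<open>a + b + c = 0\<close>]
      by (intro card_A_eps_ge[where B = "C * \<Gamma> ^ n"] finite_subset[OF _ finite_Fqn]) auto
    then show ?thesis
      by blast
  qed
  then show ?thesis
    using \<open>0 < \<epsilon>\<close> \<open>0 < cq\<close> \<open>cq < card (UNIV :: 'a set)\<close> by (intro exI[of _ \<epsilon>] conjI exI[of _ cq]) auto
qed

end
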